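(* Let $v\ne 7$ with $v\equiv 1\pmod 6$ or $v\equiv 9\pmod{18}$. Then every cyclic $\mathrm{STS}(v)$ admits a zero-sum $3$-flow.
   Context: A Steiner triple system $\mathrm{STS}(v)$ is a pair $(X,\mathcal{B})$ with $|X|=v$ and $\mathcal{B}$ a collection of 3-subsets of $X$ such that every 2-subset lies in exactly one block. It is cyclic if, after relabeling, $X=\mathbb{Z}_v$ and $i\mapsto i+1\pmod v$ maps blocks to blocks. For a design $(X,\mathcal{B})$ and integer $n\ge2$, a zero-sum $n$-flow is a map $f:\mathcal{B}\to\{\pm1,\ldots,\pm(n-1)\}$ such that $\sum_{B\ni x} f(B)=0$ for every point $x$; thus a zero-sum 3-flow takes values in $\{\pm1,\pm2\}$. *)

theory Defs
  imports Main
begin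

definition STS :: "'a set \<Rightarrow> 'a set set \<Rightarrow> bool" where
  "STS X Bs \<longleftrightarrow> finite X \<and>
     (\<forall>B\<in>Bs. B \<subseteq> X \<and> card B = 3) \<and>
     (\<forall>x\<in>X. \<forall>y\<in>X. x \<noteq> y \<longrightarrow> (\<exists>!B. B \<in> Bs \<and> {x, y} \<subseteq> B))"

definition cyclic_design :: "'a set \<Rightarrow> 'a set set \<Rightarrow> bool" where
  "cyclic_design X Bs \<longleftrightarrow>
     (\<exists>\<phi> :: 'a \<Rightarrow> nat. bij_betw \<phi> X {0..<card X} \<and>
        (\<forall>B\<in>Bs. (\<lambda>i. (i + 1) mod card X) ` (\<phi> ` B) \<in> (\<lambda>C. \<phi> ` C) ` Bs))"

definition zero_sum_flow :: "nat \<Rightarrow> 'a set \<Rightarrow> 'a set set \<Rightarrow> ('a set \<Rightarrow> int) \<Rightarrow> bool" where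
  "zero_sum_flow n X Bs f \<longleftrightarrow>
     (\<forall>B\<in>Bs. f B \<noteq> 0 \<and> \<bar>f B\<bar> \<le> int n - 1) \<and>
     (\<forall>x\<in>X. (\<Sum>B\<in>{B\<in>Bs. x \<in> B}. f B) = 0)"

end

(*
  A block fixed by a translation
  by k satisfies v | 3k, since translation adds 3k to the sum of its points; so a block
  orbit is either full, with v blocks, or (only if 3 | v) the short orbit of the blocks
  {x, x + v/3, x + 2v/3}. Every point lies in exactly 3 blocks of each full orbit.

  If v = 1 (mod 6) all orbits are full, and giving the blocks of each orbit a constant
  weight in {-2, -1, 1, 2}, these constants summing to 0, yields a zero-sum 3-flow. This is
  possible unless there is exactly one orbit, which happens only for v = 7.

  If v = 9 (mod 18), write v = 3n with n odd. Counting the pairs {x, y} with x = 0 and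
  y = 1 (mod 3) block by block shows, by parity, that some block B meets all three residue
  classes. Weighting the translate B + k of B by g (k mod 3) contributes g 0 + g 1 + g 2 at
  every point, and these three values are chosen to cancel the contributions of the short
  orbit (weight -1) and of the remaining full orbits.
*)
theory Submission
  imports Defs
begin

section \<open>Translations modulo v\<close>

lemma mod_less_double: "(a::nat) < 2 * v \<Longrightarrow> a mod v = (if a < v then a else a - v)"
  by (simp add: le_mod_geq)

lemma add_mod_eq_iff:
  assumes "x < (v::nat)" "c < v" "k < v"
  shows "(c + k) mod v = x \<longleftrightarrow> k = (x + v - c) mod v"
  using assms by (simp add: le_mod_geq mod_if) linarith

lemma inj_on_add_mod: "inj_on (\<lambda>i::nat. (i + k) mod v) {..<v}"
proof (rule inj_onI)
  fix i j assume ij: "i \<in> {..<v}" "j \<in> {..<v}" and "(i + k) mod v = (j + k) mod v"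
  then have "(i + k mod v) mod v = (j + k mod v) mod v" by (simp add: mod_add_right_eq)
  moreover have "k mod v < v" using ij by simp
  ultimately show "i = j" using ij
    by (simp add: mod_less_double[of "i + k mod v" v] mod_less_double[of "j + k mod v" v] split: if_splits)
qed

lemma mod_cancel_left:
  assumes "(a1::nat) + b1 = a2 + b2" "a1 mod m = a2 mod m"
  shows "b1 mod m = b2 mod m"
proof -
  have "int b1 - int b2 = int a2 - int a1" using assms(1) by simp
  moreover have "int m dvd int a2 - int a1"
    using assms(2) by (metis mod_eq_dvd_iff of_nat_mod)
  ultimately show ?thesis by (metis mod_eq_dvd_iff of_nat_eq_iff of_nat_mod)
qed

lemma card_residue_class:
  assumes "r < m"
  shows "card {x. x < m * n \<and> x mod m = r} = n"
proof -
  have "{x. x < m * n \<and> x mod m = r} = (\<lambda>i. m * i + r) ` {..<n}"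
  proof (intro set_eqI iffI)
    fix x assume "x \<in> {x. x < m * n \<and> x mod m = r}"
    then have "x = m * (x div m) + r" "x div m < n"
      by (auto simp: less_mult_imp_div_less mult.commute)
    then show "x \<in> (\<lambda>i. m * i + r) ` {..<n}" by blast
  next
    fix x assume "x \<in> (\<lambda>i. m * i + r) ` {..<n}"
    then obtain i where "i < n" "x = m * i + r" by blast
    moreover have "m * i + r < m * (i + 1)" using assms by simp
    moreover have "m * (i + 1) \<le> m * n" using \<open>i < n\<close> by (intro mult_le_mono2) simp
    ultimately show "x \<in> {x. x < m * n \<and> x mod m = r}" using assms by simp
  qed
  moreover have "inj_on (\<lambda>i. m * i + r) {..<n}"
    using assms by (auto simp: inj_on_def)
  ultimately show ?thesis by (simp add: card_image)
qed

lemma even_mult_if_sum_3: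
  fixes a b c :: nat
  assumes "a + b + c = 3" "2 \<le> a \<or> 2 \<le> b \<or> 2 \<le> c"
  shows "even (a * b)"
proof -
  have "a \<le> 3" "b \<le> 3" using assms(1) by auto
  then show ?thesis using assms
    by (auto simp: le_Suc_eq numeral_3_eq_3 numeral_2_eq_2)
qed

definition translate :: "nat \<Rightarrow> nat \<Rightarrow> nat set \<Rightarrow> nat set" where
  "translate v k C = (\<lambda>i. (i + k) mod v) ` C"

definition orbit :: "nat \<Rightarrow> nat set \<Rightarrow> nat set set" where
  "orbit v C = range (\<lambda>k. translate v k C)"

definition full_orbit :: "nat \<Rightarrow> nat set \<Rightarrow> bool" where
  "full_orbit v C \<longleftrightarrow> (\<forall>k. 0 < k \<and> k < v \<longrightarrow> translate v k C \<noteq> C)"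

lemma translate_translate: "translate v a (translate v b C) = translate v (b + a) C"
  unfolding translate_def image_image by (simp add: mod_add_left_eq add.assoc)

lemma translate_commute: "translate v a (translate v b C) = translate v b (translate v a C)"
  by (simp add: translate_translate add.commute)

lemma translate_mod: "translate v (k mod v) C = translate v k C"
  unfolding translate_def by (simp add: mod_add_right_eq)

lemma translate_0: "C \<subseteq> {..<v} \<Longrightarrow> translate v 0 C = C"
  unfolding translate_def by (force simp: subset_iff image_iff)

lemma translate_inverse: "C \<subseteq> {..<v} \<Longrightarrow> k \<le> v \<Longrightarrow> translate v (v - k) (translate v k C) = C"
  by (metis translate_translate translate_0 translate_mod le_add_diff_inverse mod_self)

lemma orbit_eq_image: "0 < v \<Longrightarrow> orbit v C = (\<lambda>k. translate v k C) ` {..<v}"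
  unfolding orbit_def by (auto simp: image_iff intro!: bexI[of _ "_ mod v"] simp: translate_mod)

lemma finite_orbit: "0 < v \<Longrightarrow> finite (orbit v C)"
  by (simp add: orbit_eq_image)

lemma mem_orbit_self: "C \<subseteq> {..<v} \<Longrightarrow> C \<in> orbit v C"
  unfolding orbit_def by (metis rangeI translate_0)

lemma orbit_translate:
  assumes "C \<subseteq> {..<v}" "0 < v"
  shows "orbit v (translate v k C) = orbit v C"
proof -
  have "C = translate v (v - k mod v) (translate v k C)"
    using translate_inverse[OF assms(1), of "k mod v"] assms(2) by (simp add: translate_mod)
  then have "orbit v C \<subseteq> orbit v (translate v k C)"
    unfolding orbit_def by (metis image_subsetI rangeI translate_translate)
  moreover have "orbit v (translate v k C) \<subseteq> orbit v C"
    unfolding orbit_def by (auto simp: translate_translate)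
  ultimately show ?thesis by blast
qed

lemma orbit_eq_if_mem: "C \<subseteq> {..<v} \<Longrightarrow> 0 < v \<Longrightarrow> E \<in> orbit v C \<Longrightarrow> orbit v E = orbit v C"
  unfolding orbit_def using orbit_translate[unfolded orbit_def] by blast

text \<open>The sum of the elements of C is invariant modulo v, while translation by k adds |C| k.\<close>
lemma translate_fixed_dvd:
  assumes "C \<subseteq> {..<v}" "finite C" "translate v k C = C"
  shows "v dvd card C * k"
proof -
  have "(\<Sum>c\<in>C. c) mod v = (\<Sum>c\<in>C. (c + k) mod v) mod v"
    using assms unfolding translate_def
    by (metis (no_types, lifting) inj_on_add_mod inj_on_subset sum.reindex_cong)
  also have "\<dots> = ((\<Sum>c\<in>C. c) + card C * k) mod v"
    by (simp add: mod_sum_eq sum.distrib)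
  finally show ?thesis
    using mod_eq_dvd_iff_nat[of "\<Sum>c\<in>C. c" "(\<Sum>c\<in>C. c) + card C * k" v] by simp
qed

lemma full_orbit_if_coprime:
  assumes "C \<subseteq> {..<v}" "finite C" "coprime (card C) v"
  shows "full_orbit v C"
  unfolding full_orbit_def
proof (intro allI impI notI)
  fix k assume "0 < k \<and> k < v" "translate v k C = C"
  then show False
    using translate_fixed_dvd[OF assms(1,2)] assms(3)
    by (metis coprime_commute coprime_dvd_mult_right_iff nat_dvd_not_less)
qed

lemma full_orbit_iff_third:
  assumes "C \<subseteq> {..<v}" "finite C" "card C = 3" "v = 3 * n"
  shows "full_orbit v C \<longleftrightarrow> translate v n C \<noteq> C"
proof
  have "0 < n" using assms(1,3,4) by (cases "n = 0") auto
  then show "full_orbit v C \<Longrightarrow> translate v n C \<noteq> C"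
    using assms(4) unfolding full_orbit_def by simp
next
  assume ne: "translate v n C \<noteq> C"
  show "full_orbit v C" unfolding full_orbit_def
  proof (intro allI impI notI)
    fix k assume k: "0 < k \<and> k < v" and fixed: "translate v k C = C"
    then obtain q where q: "3 * k = v * q"
      using translate_fixed_dvd[OF assms(1,2) fixed] assms(3) by (auto elim: dvdE)
    have "v * q < v * 3" using q k by linarith
    moreover have "q \<noteq> 0" using q k by (metis mult_0_right mult_is_0 zero_neq_numeral not_gr0)
    ultimately have "q = 1 \<or> q = 2" by auto
    then have "k = n \<or> k = 2 * n" using q assms(4) by auto
    moreover have "translate v (2 * n) (translate v (2 * n) C) = translate v n C"
      using translate_mod[of v "4 * n" C] assms(4) by (simp add: translate_translate)
    ultimately show False using fixed ne by auto
  qed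
qed

lemma rainbow_full_orbit:
  assumes v: "v = 3 * n" "3 dvd n"
    and B: "B \<subseteq> {..<v}" "card B = 3" and rainbow: "inj_on (\<lambda>b. b mod 3) B"
  shows "full_orbit v B"
proof -
  have fin: "finite B" using B(1) finite_subset by blast
  obtain c where c: "c \<in> B" using B(2) by fastforce
  have "c < v" "0 < n" using c B(1) v(1) by auto
  then have moved: "(c + n) mod v \<noteq> c"
    using v(1) mod_less_double[of "c + n" v] by auto
  have "((c + n) mod v) mod 3 = c mod 3"
    using v by (simp add: mod_mod_cancel mod_add_right_eq[of c n 3, symmetric] dvd_eq_mod_eq_0)
  then have "(c + n) mod v \<notin> B" using rainbow c moved unfolding inj_on_def by blast
  then have "translate v n B \<noteq> B" using c unfolding translate_def by blast
  then show ?thesis using full_orbit_iff_third[OF B(1) fin B(2) v(1)] by simp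
qed

lemma inj_on_translates:
  assumes "C \<subseteq> {..<v}" "full_orbit v C"
  shows "inj_on (\<lambda>k. translate v k C) {..<v}"
proof -
  have diff_fixed: "translate v (j - i) C = C" if "translate v i C = translate v j C" "i < j" "j < v" for i j
  proof -
    have "C = translate v (v - i) (translate v j C)"
      using translate_inverse[OF assms(1), of i] that by simp
    also have "\<dots> = translate v (j - i + v) C" using that by (simp add: translate_translate)
    finally show ?thesis by (metis translate_mod mod_add_self2)
  qed
  show ?thesis
  proof (rule inj_onI)
    fix i j assume "i \<in> {..<v}" "j \<in> {..<v}" "translate v i C = translate v j C"
    then show "i = j" using diff_fixed[of i j] diff_fixed[of j i] assms(2)
      unfolding full_orbit_def by (cases i j rule: linorder_cases) auto
  qed
qed

lemma full_orbit_mem: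
  assumes "C \<subseteq> {..<v}" "full_orbit v C" "E \<in> orbit v C"
  shows "full_orbit v E"
  unfolding full_orbit_def
proof (intro allI impI notI)
  fix k assume k: "0 < k \<and> k < v" and fixed: "translate v k E = E"
  obtain j where j: "E = translate v (j mod v) C"
    using assms(3) unfolding orbit_def by (metis rangeE translate_mod)
  have "translate v k C = translate v (v - j mod v) (translate v k E)"
    using j translate_inverse[OF assms(1), of "j mod v"] k by (simp add: translate_commute)
  also have "\<dots> = C" using j fixed translate_inverse[OF assms(1), of "j mod v"] k by simp
  finally show False using assms(2) k unfolding full_orbit_def by blast
qed

section \<open>Blocks of an orbit through a point\<close>

text \<open>Each point x lies in exactly one translate of C per element b of C, namely the
  translate by x - b.\<close>
lemma sum_orbit_through:
  assumes C: "C \<subseteq> {..<v}" "full_orbit v C" and x: "x < v"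
  shows "sum F {E\<in>orbit v C. x \<in> E} = (\<Sum>b\<in>C. F (translate v ((x + v - b) mod v) C))"
proof -
  have v: "0 < v" using x by simp
  let ?g = "\<lambda>b. (x + v - b) mod v"
  have shifts_through: "{k\<in>{..<v}. x \<in> translate v k C} = ?g ` C"
  proof (intro set_eqI iffI)
    fix k assume "k \<in> {k\<in>{..<v}. x \<in> translate v k C}"
    then obtain c where "c \<in> C" "(c + k) mod v = x" "k < v" unfolding translate_def by auto
    then show "k \<in> ?g ` C" using add_mod_eq_iff[OF x, of c k] C(1) by auto
  next
    fix k assume "k \<in> ?g ` C"
    then obtain c where c: "c \<in> C" "k = ?g c" by blast
    then have "k < v" "(c + k) mod v = x" using add_mod_eq_iff[OF x, of c k] C(1) v by auto
    then show "k \<in> {k\<in>{..<v}. x \<in> translate v k C}" using c(1) unfolding translate_def by auto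
  qed
  have "inj_on ?g C"
  proof (rule inj_onI)
    fix b1 b2 assume b: "b1 \<in> C" "b2 \<in> C" "?g b1 = ?g b2"
    moreover have "b1 < v" "b2 < v" "?g b1 < v" using b C(1) v by auto
    ultimately have "(b1 + ?g b1) mod v = (b2 + ?g b1) mod v"
      using add_mod_eq_iff[OF x, of b1 "?g b1"] add_mod_eq_iff[OF x, of b2 "?g b1"] by simp
    then show "b1 = b2" using inj_on_add_mod[of "?g b1" v] b C(1) unfolding inj_on_def by auto
  qed
  moreover have "{E\<in>orbit v C. x \<in> E} = (\<lambda>k. translate v k C) ` {k\<in>{..<v}. x \<in> translate v k C}"
    using orbit_eq_image[OF v, of C] by auto
  moreover have "{k\<in>{..<v}. x \<in> translate v k C} \<subseteq> {..<v}" by blast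
  ultimately show ?thesis
    using sum.reindex[OF inj_on_subset[OF inj_on_translates[OF C]], of "{k\<in>{..<v}. x \<in> translate v k C}" F]
      sum.reindex[of ?g C "\<lambda>k. F (translate v k C)"] shifts_through
    by (simp add: comp_def)
qed

lemma sum_orbits_through:
  fixes w :: "nat set set \<Rightarrow> 'b::comm_semiring_1"
  assumes "finite R"
    and R: "\<And>C. C \<in> R \<Longrightarrow> C \<subseteq> {..<v} \<and> card C = m \<and> full_orbit v C \<and> orbit v C \<subseteq> R"
    and x: "x < v"
  shows "(\<Sum>C\<in>{C\<in>R. x \<in> C}. w (orbit v C)) = of_nat m * (\<Sum>Q\<in>orbit v ` R. w Q)"
proof -
  have v: "0 < v" using x by simp
  let ?through = "\<lambda>Q. {E\<in>Q. x \<in> E}"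
  have split: "{C\<in>R. x \<in> C} = \<Union>(?through ` (orbit v ` R))"
  proof (intro set_eqI iffI)
    fix C assume "C \<in> {C\<in>R. x \<in> C}"
    then show "C \<in> \<Union>(?through ` (orbit v ` R))" using R[of C] mem_orbit_self[of C v] by blast
  next
    fix E assume "E \<in> \<Union>(?through ` (orbit v ` R))"
    then obtain C where "C \<in> R" "E \<in> orbit v C" "x \<in> E" by blast
    then show "E \<in> {C\<in>R. x \<in> C}" using R[of C] by blast
  qed
  have disjoint: "?through Q1 \<inter> ?through Q2 = {}"
    if Q: "Q1 \<in> orbit v ` R" "Q2 \<in> orbit v ` R" "Q1 \<noteq> Q2" for Q1 Q2
  proof -
    obtain C1 C2 where C: "C1 \<in> R" "C2 \<in> R" "Q1 = orbit v C1" "Q2 = orbit v C2" using Q by blast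
    have "orbit v C1 = orbit v C2" if "E \<in> orbit v C1" "E \<in> orbit v C2" for E
      using orbit_eq_if_mem[OF _ v that(1)] orbit_eq_if_mem[OF _ v that(2)] R[OF C(1)] R[OF C(2)] by simp
    then show ?thesis using Q(3) C by blast
  qed
  have per_orbit: "(\<Sum>E\<in>?through Q. w (orbit v E)) = of_nat m * w Q" if "Q \<in> orbit v ` R" for Q
  proof -
    obtain C where C: "C \<in> R" "Q = orbit v C" using \<open>Q \<in> orbit v ` R\<close> by blast
    have "(\<Sum>E\<in>?through Q. w (orbit v E)) = (\<Sum>E\<in>?through Q. w Q)"
      using C R[OF C(1)] orbit_eq_if_mem[OF _ v] by (intro sum.cong) auto
    also have "\<dots> = (\<Sum>b\<in>C. w Q)"
      using sum_orbit_through[of C v x "\<lambda>_. w Q"] C R x by simp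
    finally show ?thesis using C R by simp
  qed
  have "(\<Sum>C\<in>{C\<in>R. x \<in> C}. w (orbit v C)) = (\<Sum>Q\<in>orbit v ` R. \<Sum>E\<in>?through Q. w (orbit v E))"
    unfolding split using assms(1) finite_orbit[OF v] disjoint by (intro sum.UNION_disjoint) auto
  also have "\<dots> = of_nat m * (\<Sum>Q\<in>orbit v ` R. w Q)"
    by (simp add: per_orbit sum_distrib_left)
  finally show ?thesis .
qed

text \<open>Since 3 divides v, the shifts x - b (b \<in> B) moving B onto a block through x run over all
  residues mod 3.\<close>
lemma sum_rainbow_orbit_through:
  fixes g :: "nat \<Rightarrow> 'b::comm_monoid_add"
  assumes v: "v = 3 * n" and B: "B \<subseteq> {..<v}" "card B = 3" "full_orbit v B"
    and rainbow: "inj_on (\<lambda>b. b mod 3) B" and x: "x < v"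
  shows "(\<Sum>C\<in>{C\<in>orbit v B. x \<in> C}. g (inv_into {..<v} (\<lambda>k. translate v k B) C mod 3))
    = g 0 + g 1 + g 2"
proof -
  let ?h = "\<lambda>b. (x + v - b) mod 3"
  have "inj_on ?h B"
  proof (rule inj_onI)
    fix b1 b2 assume b: "b1 \<in> B" "b2 \<in> B" "?h b1 = ?h b2"
    moreover have "b1 < v" "b2 < v" using b(1,2) B(1) by auto
    then have "x + v - b1 + b1 = x + v - b2 + b2" by simp
    ultimately have "b1 mod 3 = b2 mod 3" using mod_cancel_left by blast
    then show "b1 = b2" using rainbow b unfolding inj_on_def by blast
  qed
  moreover have "?h ` B = {..<3}"
    using calculation B(2) by (intro card_subset_eq) (auto simp: card_image)
  moreover have "((x + v - b) mod v) mod 3 = ?h b" for b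
    using v by (simp add: mod_mod_cancel)
  ultimately have sum_residues: "(\<Sum>b\<in>B. g (((x + v - b) mod v) mod 3)) = (\<Sum>i<3. g i)"
    using sum.reindex[of ?h B g] by simp
  let ?idx = "inv_into {..<v} (\<lambda>k. translate v k B)"
  have "(\<Sum>C\<in>{C\<in>orbit v B. x \<in> C}. g (?idx C mod 3))
      = (\<Sum>b\<in>B. g (?idx (translate v ((x + v - b) mod v) B) mod 3))"
    by (rule sum_orbit_through[OF B(1,3) x])
  also have "\<dots> = (\<Sum>b\<in>B. g (((x + v - b) mod v) mod 3))"
    using inv_into_f_f[OF inj_on_translates[OF B(1,3)]] x by (intro sum.cong) simp_all
  also have "\<dots> = (\<Sum>i<3. g i)" by (rule sum_residues)
  also have "\<dots> = g 0 + g 1 + g 2" by (simp add: lessThan_nat_numeral ac_simps)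
  finally show ?thesis .
qed

lemma exists_weights_sum_zero:
  assumes "finite S" "card S \<noteq> 1"
  shows "\<exists>w::'a \<Rightarrow> int. (\<forall>s\<in>S. w s \<in> {-2, -1, 1, 2}) \<and> (\<Sum>s\<in>S. w s) = 0"
  using assms
proof (induction "card S" arbitrary: S rule: less_induct)
  case less
  consider "S = {}" | "card S = 3" | a b where "a \<in> S" "b \<in> S" "a \<noteq> b" "card S \<noteq> 3"
  proof (cases "S = {}")
    case True
    then show ?thesis by (rule that(1))
  next
    case False
    then have "\<not> card S \<le> Suc 0" using less.prems card_0_eq[of S] by linarith
    then show ?thesis using that(2,3) less.prems(1) card_le_Suc0_iff_eq[of S] by blast
  qed
  then show ?case
  proof cases
    case 1 then show ?thesis by simp
  next
    case 2
    then obtain a b c where "S = {a, b, c}" "a \<noteq> b" "b \<noteq> c" "a \<noteq> c" by (auto simp: card_3_iff)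
    then show ?thesis by (intro exI[of _ "(\<lambda>_. 0)(a := 1, b := 1, c := -2)"]) auto
  next
    case 3
    let ?S' = "S - {a, b}"
    have "card ?S' = card S - 2" using 3 less.prems(1) by (simp add: card_Diff_subset)
    then have "card ?S' < card S" "card ?S' \<noteq> 1" using 3 less.prems card_gt_0_iff[of S] by auto
    moreover have "finite ?S'" using less.prems(1) by blast
    ultimately have "\<exists>w::'a \<Rightarrow> int. (\<forall>s\<in>?S'. w s \<in> {-2, -1, 1, 2}) \<and> (\<Sum>s\<in>?S'. w s) = 0"
      by (intro less.hyps)
    then obtain w :: "'a \<Rightarrow> int" where w: "\<forall>s\<in>?S'. w s \<in> {-2, -1, 1, 2}" "(\<Sum>s\<in>?S'. w s) = 0"
      by (elim exE conjE)
    let ?w = "w(a := 1, b := -1)"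
    have "sum ?w S = ?w a + sum ?w (S - {a})"
      using 3(1) less.prems(1) by (intro sum.remove)
    also have "sum ?w (S - {a}) = ?w b + sum ?w (S - {a} - {b})"
      using 3(2,3) less.prems(1) by (intro sum.remove) auto
    also have "S - {a} - {b} = ?S'" by blast
    also have "sum ?w ?S' = sum w ?S'" by (rule sum.cong) auto
    finally have "sum ?w S = ?w a + (?w b + sum w ?S')" .
    moreover have "?w a = 1" "?w b = -1" using \<open>a \<noteq> b\<close> by simp_all
    ultimately have "sum ?w S = 0" using w(2) by linarith
    moreover have "\<forall>s\<in>S. ?w s \<in> {-2, -1, 1, 2}" using w(1) by auto
    ultimately show ?thesis by blast
  qed
qed

lemma exists_weights_sum_0_or_1:
  assumes "finite S"
  shows "\<exists>w::'a \<Rightarrow> int. (\<forall>s\<in>S. w s \<in> {-2, -1, 1, 2}) \<and> (\<Sum>s\<in>S. w s) \<in> {0, 1}"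
proof (cases "card S = 1")
  case True
  then show ?thesis by (intro exI[of _ "\<lambda>_. 1"]) (auto simp: card_1_singleton_iff)
next
  case False
  then show ?thesis using exists_weights_sum_zero[OF assms] by fastforce
qed

lemma exists_triple_sum:
  fixes G :: int
  assumes "\<bar>G\<bar> \<le> 3"
  shows "\<exists>a b c. {a, b, c} \<subseteq> {-2, -1, 1, 2} \<and> a + b + c = G"
proof -
  consider "G = 2" | "G = -2" | "G \<in> {0, 1, 3}" | "G \<in> {-3, -1}"
    using assms by fastforce
  then show ?thesis
  proof cases
    case 1 then show ?thesis by (intro exI[of _ 2] exI[of _ 1] exI[of _ "-1"]) simp
  next
    case 2 then show ?thesis by (intro exI[of _ "-2"] exI[of _ "-1"] exI[of _ 1]) simp
  next
    case 3 then show ?thesis by (intro exI[of _ 1] exI[of _ 1] exI[of _ "G - 2"]) auto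
  next
    case 4 then show ?thesis by (intro exI[of _ "-1"] exI[of _ "-1"] exI[of _ "G + 2"]) auto
  qed
qed

section \<open>Relabelling designs\<close>

lemma zero_sum_flow_3_iff:
  "zero_sum_flow 3 X Bs f \<longleftrightarrow>
     (\<forall>B\<in>Bs. f B \<in> {-2, -1, 1, 2}) \<and> (\<forall>x\<in>X. (\<Sum>B\<in>{B\<in>Bs. x \<in> B}. f B) = 0)"
  unfolding zero_sum_flow_def by auto

lemma STS_image:
  assumes "bij_betw \<phi> X Y" "STS X Bs"
  shows "STS Y ((`) \<phi> ` Bs)"
proof -
  have inj: "inj_on \<phi> X" and Y: "Y = \<phi> ` X" using assms(1) by (auto simp: bij_betw_def)
  have blocks: "B \<subseteq> X" "card B = 3" if "B \<in> Bs" for B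
    using assms(2) that unfolding STS_def by auto
  have pairs: "\<exists>!B. B \<in> Bs \<and> {a, b} \<subseteq> B" if "a \<in> X" "b \<in> X" "a \<noteq> b" for a b
    using assms(2) that unfolding STS_def by auto
  have image_mem: "a \<in> B \<longleftrightarrow> \<phi> a \<in> \<phi> ` B" if "a \<in> X" "B \<in> Bs" for a B
    using inj_on_image_mem_iff[OF inj that(1) blocks(1)[OF that(2)]] by simp
  have image_pairs: "\<exists>!C. C \<in> (`) \<phi> ` Bs \<and> {x, y} \<subseteq> C" if xy: "x \<in> Y" "y \<in> Y" "x \<noteq> y" for x y
  proof -
    obtain a b where ab: "a \<in> X" "b \<in> X" "a \<noteq> b" and ab_xy: "x = \<phi> a" "y = \<phi> b"
      using xy Y by blast
    obtain B where B: "B \<in> Bs \<and> {a, b} \<subseteq> B" and uniq: "\<And>B'. B' \<in> Bs \<and> {a, b} \<subseteq> B' \<Longrightarrow> B' = B"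
      using pairs[OF ab] by (elim ex1E) blast
    show ?thesis
    proof (rule ex1I[of _ "\<phi> ` B"])
      show "\<phi> ` B \<in> (`) \<phi> ` Bs \<and> {x, y} \<subseteq> \<phi> ` B" using B ab_xy by auto
    next
      fix C assume C: "C \<in> (`) \<phi> ` Bs \<and> {x, y} \<subseteq> C"
      then obtain B' where B': "B' \<in> Bs" "C = \<phi> ` B'" by blast
      then have "{a, b} \<subseteq> B'" using C ab_xy image_mem[OF ab(1) B'(1)] image_mem[OF ab(2) B'(1)] by simp
      then show "C = \<phi> ` B" using uniq B' by blast
    qed
  qed
  have image_blocks: "\<phi> ` B \<subseteq> Y \<and> card (\<phi> ` B) = 3" if "B \<in> Bs" for B
    using blocks[OF that] Y card_image[OF inj_on_subset[OF inj]] by auto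
  show ?thesis unfolding STS_def
  proof (intro conjI ballI impI)
    show "finite Y" using assms(2) Y unfolding STS_def by simp
  next
    fix C assume "C \<in> (`) \<phi> ` Bs"
    then show "C \<subseteq> Y" "card C = 3" using image_blocks by blast+
  qed (rule image_pairs)
qed

lemma zero_sum_flow_image:
  assumes "inj_on \<phi> X" "\<forall>B\<in>Bs. B \<subseteq> X" "zero_sum_flow n (\<phi> ` X) ((`) \<phi> ` Bs) f"
  shows "zero_sum_flow n X Bs (\<lambda>B. f (\<phi> ` B))"
  unfolding zero_sum_flow_def
proof (intro conjI ballI)
  fix B assume "B \<in> Bs"
  then show "f (\<phi> ` B) \<noteq> 0" "\<bar>f (\<phi> ` B)\<bar> \<le> int n - 1"
    using assms(3) unfolding zero_sum_flow_def by auto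
next
  fix a assume a: "a \<in> X"
  have inj_image: "inj_on ((`) \<phi>) Bs"
    using assms(1,2) by (meson inj_onI inj_on_image_eq_iff)
  have "(`) \<phi> ` {B\<in>Bs. a \<in> B} = {C\<in>(`) \<phi> ` Bs. \<phi> a \<in> C}"
    using inj_on_image_mem_iff[OF assms(1) a] assms(2) by auto
  then have "(\<Sum>B\<in>{B\<in>Bs. a \<in> B}. f (\<phi> ` B)) = (\<Sum>C\<in>{C\<in>(`) \<phi> ` Bs. \<phi> a \<in> C}. f C)"
    using sum.reindex[OF inj_on_subset[OF inj_image], of "{B\<in>Bs. a \<in> B}" f] by (simp add: comp_def)
  also have "\<dots> = 0" using assms(3) a unfolding zero_sum_flow_def by simp
  finally show "(\<Sum>B\<in>{B\<in>Bs. a \<in> B}. f (\<phi> ` B)) = 0" .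
qed

section \<open>Cyclic Steiner triple systems\<close>

locale cyclic_sts =
  fixes v :: nat and D :: "nat set set"
  assumes pos: "0 < v"
    and sts: "STS {..<v} D"
    and translate_closed: "C \<in> D \<Longrightarrow> translate v 1 C \<in> D"
begin

lemma block_subset: "C \<in> D \<Longrightarrow> C \<subseteq> {..<v}"
  using sts unfolding STS_def by blast

lemma card_block: "C \<in> D \<Longrightarrow> card C = 3"
  using sts unfolding STS_def by blast

lemma finite_block: "C \<in> D \<Longrightarrow> finite C"
  using block_subset finite_subset by blast

lemma pair_block: "x < v \<Longrightarrow> y < v \<Longrightarrow> x \<noteq> y \<Longrightarrow> \<exists>!C. C \<in> D \<and> {x, y} \<subseteq> C"
  using sts lessThan_iff unfolding STS_def by metis

lemma pair_block_unique:
  assumes "x < v" "y < v" "x \<noteq> y" "C1 \<in> D" "C2 \<in> D" "{x, y} \<subseteq> C1" "{x, y} \<subseteq> C2"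
  shows "C1 = C2"
  using pair_block[OF assms(1-3)] assms(4-7) by (elim ex1E) blast

lemma finite_blocks: "finite D"
  using block_subset by (intro finite_subset[of D "Pow {..<v}"]) auto

lemma three_le: "C \<in> D \<Longrightarrow> 3 \<le> v"
  using card_mono[OF _ block_subset] card_block by fastforce

lemma translate_block: "C \<in> D \<Longrightarrow> translate v k C \<in> D"
proof (induction k)
  case 0 then show ?case using block_subset translate_0 by metis
next
  case (Suc k) then show ?case using translate_closed[of "translate v k C"] by (simp add: translate_translate)
qed

lemma orbit_subset_blocks: "C \<in> D \<Longrightarrow> orbit v C \<subseteq> D"
  unfolding orbit_def using translate_block by blast

lemma full_orbit_iff_third_block:
  "v = 3 * n \<Longrightarrow> C \<in> D \<Longrightarrow> full_orbit v C \<longleftrightarrow> translate v n C \<noteq> C"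
  using full_orbit_iff_third[OF block_subset finite_block card_block] by blast

lemma orbit_subset_nonfixed:
  assumes "v = 3 * n" "C \<in> D" "full_orbit v C"
  shows "orbit v C \<subseteq> {E\<in>D. translate v n E \<noteq> E}"
  using orbit_subset_blocks[OF assms(2)] full_orbit_mem[OF block_subset[OF assms(2)] assms(3)]
    full_orbit_iff_third_block[OF assms(1)] by blast

text \<open>Both sides count the pairs in P \<times> Q, each pair lying in exactly one block.\<close>
lemma card_times_card_eq_sum_blocks:
  assumes "P \<subseteq> {..<v}" "Q \<subseteq> {..<v}" "P \<inter> Q = {}"
  shows "card P * card Q = (\<Sum>C\<in>D. card (C \<inter> P) * card (C \<inter> Q))"
proof -
  have "P \<times> Q = (\<Union>C\<in>D. (C \<inter> P) \<times> (C \<inter> Q))"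
  proof (intro set_eqI iffI)
    fix p assume "p \<in> P \<times> Q"
    then obtain x y where xy: "p = (x, y)" "x \<in> P" "y \<in> Q" by blast
    then have "x < v" "y < v" "x \<noteq> y" using assms by auto
    then obtain C where "C \<in> D" "{x, y} \<subseteq> C" using pair_block by blast
    then show "p \<in> (\<Union>C\<in>D. (C \<inter> P) \<times> (C \<inter> Q))" using xy by blast
  qed blast
  moreover have "((C1 \<inter> P) \<times> (C1 \<inter> Q)) \<inter> ((C2 \<inter> P) \<times> (C2 \<inter> Q)) = {}"
    if "C1 \<in> D" "C2 \<in> D" "C1 \<noteq> C2" for C1 C2
    using that assms pair_block_unique[of _ _ C1 C2] by blast
  ultimately have "card (P \<times> Q) = (\<Sum>C\<in>D. card ((C \<inter> P) \<times> (C \<inter> Q)))"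
    using finite_blocks finite_block by (simp add: card_UN_disjoint)
  then show ?thesis by (simp add: card_cartesian_product)
qed

text \<open>The three blocks through 0 of a single full orbit would have to cover all v points.\<close>
lemma single_full_orbit_bound:
  assumes full: "\<And>C. C \<in> D \<Longrightarrow> full_orbit v C" and single: "card (orbit v ` D) = 1"
  shows "v \<le> 9"
proof -
  obtain Q where Q: "orbit v ` D = {Q}" using single by (auto simp: card_1_singleton_iff)
  then obtain C0 where C0: "C0 \<in> D" by blast
  have in_orbit: "E \<in> orbit v C0" if "E \<in> D" for E
    using Q C0 that mem_orbit_self[OF block_subset[OF that]] by blast
  let ?T = "{E\<in>orbit v C0. 0 \<in> E}"
  have "sum (\<lambda>_. 1::nat) ?T = (\<Sum>b\<in>C0. 1)"
    by (rule sum_orbit_through[OF block_subset[OF C0] full[OF C0] pos])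
  then have card_T: "card ?T = 3" using card_block[OF C0] by simp
  have "{..<v} \<subseteq> \<Union>?T"
  proof
    fix y assume y: "y \<in> {..<v}"
    show "y \<in> \<Union>?T"
    proof (cases "y = 0")
      case True
      have "?T \<noteq> {}" using card_T by (metis card.empty zero_neq_numeral)
      then show ?thesis using True by blast
    next
      case False
      then obtain E where "E \<in> D" "{0, y} \<subseteq> E" using pair_block[of 0 y] y pos by auto
      then show ?thesis using in_orbit by blast
    qed
  qed
  moreover have "finite (\<Union>?T)"
    by (rule finite_subset[of _ "{..<v}"]) (use orbit_subset_blocks[OF C0] block_subset in blast, simp)
  ultimately have "v \<le> card (\<Union>?T)" by (metis card_lessThan card_mono)
  also have "\<dots> \<le> (\<Sum>E\<in>?T. card E)" by (rule card_Union_le_sum_card)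
  also have "\<dots> = 9" using card_T orbit_subset_blocks[OF C0] card_block by (simp add: subset_iff)
  finally show ?thesis .
qed

lemma zero_sum_flow_if_mod_6:
  assumes "v mod 6 = 1" "v \<noteq> 7"
  shows "\<exists>f. zero_sum_flow 3 {..<v} D f"
proof -
  have "v mod 3 = 1" using assms(1) by presburger
  then have "coprime 3 v" using coprime_mod_right_iff[of 3 v] by simp
  then have full: "full_orbit v C" if "C \<in> D" for C
    using full_orbit_if_coprime[OF block_subset[OF that] finite_block[OF that]] card_block[OF that] by simp
  have "card (orbit v ` D) \<noteq> 1"
  proof
    assume "card (orbit v ` D) = 1"
    then have "v \<le> 9" "3 \<le> v"
      using single_full_orbit_bound full three_le by (auto simp: card_1_singleton_iff)
    then show False using assms by presburger
  qed
  then obtain w :: "nat set set \<Rightarrow> int" where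
    w: "\<forall>Q\<in>orbit v ` D. w Q \<in> {-2, -1, 1, 2}" "(\<Sum>Q\<in>orbit v ` D. w Q) = 0"
    using exists_weights_sum_zero[of "orbit v ` D"] finite_blocks by blast
  have "(\<Sum>C\<in>{C\<in>D. x \<in> C}. w (orbit v C)) = 0" if "x < v" for x
    using sum_orbits_through[OF finite_blocks _ that, of 3 w] w(2)
      block_subset card_block full orbit_subset_blocks by simp
  then have "zero_sum_flow 3 {..<v} D (\<lambda>C. w (orbit v C))"
    using w(1) unfolding zero_sum_flow_3_iff by simp
  then show ?thesis by blast
qed

text \<open>Parity: there are n * n pairs (x, y) with x \<equiv> 0 and y \<equiv> 1 (mod 3), an odd number,
  while a block with two points in one residue class contains an even number of them.\<close>
lemma exists_rainbow_block:
  assumes "v = 3 * n" "odd n"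
  shows "\<exists>B\<in>D. inj_on (\<lambda>b. b mod 3) B"
proof (rule ccontr)
  assume no_rainbow: "\<not> (\<exists>B\<in>D. inj_on (\<lambda>b. b mod 3) B)"
  define R where "R r = {x. x < v \<and> x mod 3 = r}" for r
  have card_R: "card (R r) = n" if "r < 3" for r
    using card_residue_class[OF that, of n] assms(1) unfolding R_def by simp
  have "even (card (C \<inter> R 0) * card (C \<inter> R 1))" if C: "C \<in> D" for C
  proof -
    have fin: "finite (C \<inter> R r)" for r using finite_block[OF C] by blast
    have "C = (C \<inter> R 0) \<union> (C \<inter> R 1) \<union> (C \<inter> R 2)" using block_subset[OF C] unfolding R_def by auto
    also have "card \<dots> = card ((C \<inter> R 0) \<union> (C \<inter> R 1)) + card (C \<inter> R 2)"
      using fin by (intro card_Un_disjoint) (auto simp: R_def)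
    also have "card ((C \<inter> R 0) \<union> (C \<inter> R 1)) = card (C \<inter> R 0) + card (C \<inter> R 1)"
      using fin by (intro card_Un_disjoint) (auto simp: R_def)
    finally have "card (C \<inter> R 0) + card (C \<inter> R 1) + card (C \<inter> R 2) = 3"
      using card_block[OF C] by simp
    moreover obtain x y where xy: "x \<in> C" "y \<in> C" "x \<noteq> y" "x mod 3 = y mod 3"
      using no_rainbow C unfolding inj_on_def by blast
    have "{x, y} \<subseteq> C \<inter> R (x mod 3)" using xy block_subset[OF C] unfolding R_def by auto
    then have "card {x, y} \<le> card (C \<inter> R (x mod 3))" using fin by (intro card_mono)
    then have "2 \<le> card (C \<inter> R (x mod 3))" using xy(3) by simp
    moreover have "x mod 3 = 0 \<or> x mod 3 = 1 \<or> x mod 3 = 2" by auto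
    ultimately show ?thesis using even_mult_if_sum_3 by metis
  qed
  then have "even (\<Sum>C\<in>D. card (C \<inter> R 0) * card (C \<inter> R 1))" by (simp add: dvd_sum)
  moreover have "R 0 \<subseteq> {..<v}" "R 1 \<subseteq> {..<v}" "R 0 \<inter> R 1 = {}" unfolding R_def by auto
  ultimately have "even (card (R 0) * card (R 1))" using card_times_card_eq_sum_blocks by metis
  then show False using card_R[of 0] card_R[of 1] assms(2) by simp
qed

lemma card_fixed_blocks_through_le_1:
  assumes "v = 3 * n" "x < v"
  shows "card {C\<in>D. translate v n C = C \<and> x \<in> C} \<le> 1"
proof -
  let ?y = "(x + n) mod v"
  have "?y \<noteq> x" "?y < v"
    using assms mod_less_double[of "x + n" v] pos by auto
  moreover have "?y \<in> C" if "translate v n C = C" "x \<in> C" for C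
    using that unfolding translate_def by blast
  ultimately have "C1 = C2" if "C1 \<in> {C\<in>D. translate v n C = C \<and> x \<in> C}"
    "C2 \<in> {C\<in>D. translate v n C = C \<and> x \<in> C}" for C1 C2
    using that assms(2) pair_block_unique[of x ?y C1 C2] by auto
  then show ?thesis using finite_blocks by (simp add: card_le_Suc0_iff_eq)
qed

lemma fixed_block_through_move:
  assumes "v = 3 * n" "C \<in> D" "translate v n C = C" "x \<in> C" "y < v"
  shows "\<exists>E\<in>D. translate v n E = E \<and> y \<in> E"
proof (intro bexI conjI)
  let ?E = "translate v (y + v - x) C"
  show "?E \<in> D" using translate_block[OF assms(2)] .
  show "translate v n ?E = ?E" using translate_commute[of v n "y + v - x" C] assms(3) by simp
  have "x < v" using assms(2,4) block_subset by blast
  then have "(x + (y + v - x)) mod v = y" using assms(5) by simp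
  then show "y \<in> ?E" using assms(4) unfolding translate_def by force
qed

lemma card_fixed_blocks_through:
  assumes "v = 3 * n"
  obtains s where "s \<le> 1" "\<And>x. x < v \<Longrightarrow> card {C\<in>D. translate v n C = C \<and> x \<in> C} = s"
proof -
  let ?F = "\<lambda>x. {C\<in>D. translate v n C = C \<and> x \<in> C}"
  have move: "?F y \<noteq> {}" if ne: "?F x \<noteq> {}" and y: "y < v" for x y
  proof -
    obtain C where "C \<in> D" "translate v n C = C" "x \<in> C" using ne by blast
    then show ?thesis using fixed_block_through_move[OF assms _ _ _ y] by blast
  qed
  have "card (?F x) = card (?F 0)" if "x < v" for x
  proof -
    have "card (?F x) = 0 \<longleftrightarrow> card (?F 0) = 0"
      using move[of x 0] move[of 0 x] that pos finite_blocks by auto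
    then show ?thesis
      using card_fixed_blocks_through_le_1[OF assms that] card_fixed_blocks_through_le_1[OF assms pos]
      by linarith
  qed
  then show ?thesis using that card_fixed_blocks_through_le_1[OF assms pos] by blast
qed

lemma orbit_subset_other_full_blocks:
  assumes "v = 3 * n" "B \<in> D" "C \<in> D" "translate v n C \<noteq> C" "C \<notin> orbit v B"
  shows "orbit v C \<subseteq> {C\<in>D. translate v n C \<noteq> C} - orbit v B"
proof
  fix E assume E: "E \<in> orbit v C"
  have "E \<in> D \<and> translate v n E \<noteq> E"
    using orbit_subset_nonfixed[OF assms(1,3)] full_orbit_iff_third_block[OF assms(1,3)] assms(4) E by blast
  moreover have "E \<notin> orbit v B"
  proof
    assume "E \<in> orbit v B"
    then have "orbit v C = orbit v B"
      using orbit_eq_if_mem[OF _ pos] E block_subset assms(2,3) by metis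
    then show False using assms(5) mem_orbit_self[OF block_subset[OF assms(3)]] by simp
  qed
  ultimately show "E \<in> {C\<in>D. translate v n C \<noteq> C} - orbit v B" by blast
qed

lemma sum_blocks_through_split:
  fixes f :: "nat set \<Rightarrow> int" and g :: "nat \<Rightarrow> int"
  assumes v: "v = 3 * n" and B: "B \<in> D" "full_orbit v B" "inj_on (\<lambda>b. b mod 3) B" and x: "x < v"
    and on_orbit: "\<And>C. C \<in> orbit v B \<Longrightarrow> f C = g (inv_into {..<v} (\<lambda>k. translate v k B) C mod 3)"
    and on_fixed: "\<And>C. C \<in> D \<Longrightarrow> translate v n C = C \<Longrightarrow> f C = -1"
    and on_rest: "\<And>C. C \<in> D \<Longrightarrow> translate v n C \<noteq> C \<Longrightarrow> C \<notin> orbit v B \<Longrightarrow> f C = w (orbit v C)"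
  shows "(\<Sum>C\<in>{C\<in>D. x \<in> C}. f C) = g 0 + g 1 + g 2
    - int (card {C\<in>D. translate v n C = C \<and> x \<in> C})
    + 3 * (\<Sum>Q\<in>orbit v ` ({C\<in>D. translate v n C \<noteq> C} - orbit v B). w Q)"
proof -
  define Rest where "Rest = {C\<in>D. translate v n C \<noteq> C} - orbit v B"
  let ?S1 = "{C\<in>orbit v B. x \<in> C}" and ?S2 = "{C\<in>D. translate v n C = C \<and> x \<in> C}"
    and ?S3 = "{C\<in>Rest. x \<in> C}"
  have orbit_B: "orbit v B \<subseteq> {C\<in>D. translate v n C \<noteq> C}"
    by (rule orbit_subset_nonfixed[OF v B(1,2)])
  have Rest: "C \<subseteq> {..<v} \<and> card C = 3 \<and> full_orbit v C \<and> orbit v C \<subseteq> Rest" if "C \<in> Rest" for C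
    using that block_subset card_block full_orbit_iff_third_block[OF v]
      orbit_subset_other_full_blocks[OF v B(1)] unfolding Rest_def by blast
  have "{C\<in>D. x \<in> C} = ?S1 \<union> ?S2 \<union> ?S3"
    using orbit_subset_blocks[OF B(1)] unfolding Rest_def by blast
  moreover have "finite ?S1" "finite ?S2" "finite ?S3"
    using finite_blocks finite_orbit[OF pos] unfolding Rest_def by auto
  moreover have "?S1 \<inter> ?S2 = {}" "(?S1 \<union> ?S2) \<inter> ?S3 = {}"
    using orbit_B unfolding Rest_def by blast+
  ultimately have "(\<Sum>C\<in>{C\<in>D. x \<in> C}. f C) = sum f ?S1 + sum f ?S2 + sum f ?S3"
    by (simp add: sum.union_disjoint)
  also have "sum f ?S1 = g 0 + g 1 + g 2"
    using sum_rainbow_orbit_through[OF v block_subset[OF B(1)] card_block[OF B(1)] B(2,3) x] on_orbit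
    by simp
  also have "sum f ?S2 = - int (card ?S2)"
    using on_fixed by simp
  also have "sum f ?S3 = (\<Sum>C\<in>?S3. w (orbit v C))"
    using on_rest unfolding Rest_def by (intro sum.cong) auto
  also have "\<dots> = 3 * (\<Sum>Q\<in>orbit v ` Rest. w Q)"
    using sum_orbits_through[of Rest v 3 x w] Rest finite_blocks x unfolding Rest_def by simp
  finally show ?thesis unfolding Rest_def by simp
qed

lemma zero_sum_flow_if_mod_18:
  assumes "v mod 18 = 9"
  shows "\<exists>f. zero_sum_flow 3 {..<v} D f"
proof -
  define n where "n = v div 3"
  have v: "v = 3 * n" "3 dvd n" "odd n" using assms unfolding n_def by presburger+
  obtain B where B: "B \<in> D" "inj_on (\<lambda>b. b mod 3) B" using exists_rainbow_block[OF v(1,3)] by blast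
  have B_full: "full_orbit v B"
    by (rule rainbow_full_orbit[OF v(1,2) block_subset[OF B(1)] card_block[OF B(1)] B(2)])
  obtain s where s: "s \<le> 1" "\<And>x. x < v \<Longrightarrow> card {C\<in>D. translate v n C = C \<and> x \<in> C} = s"
    using card_fixed_blocks_through[OF v(1)] by blast
  define Rest where "Rest = {C\<in>D. translate v n C \<noteq> C} - orbit v B"
  have "finite (orbit v ` Rest)" using finite_blocks unfolding Rest_def by simp
  then obtain w :: "nat set set \<Rightarrow> int" where
    w: "\<forall>Q\<in>orbit v ` Rest. w Q \<in> {-2, -1, 1, 2}" "(\<Sum>Q\<in>orbit v ` Rest. w Q) \<in> {0, 1}"
    using exists_weights_sum_0_or_1 by blast
  define T where "T = (\<Sum>Q\<in>orbit v ` Rest. w Q)"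
  obtain a b c where abc: "{a, b, c} \<subseteq> {-2, -1, 1, 2}" "a + b + c = int s - 3 * T"
    using exists_triple_sum[of "int s - 3 * T"] s(1) w(2) unfolding T_def by fastforce
  define g where "g i = (if i = 0 then a else if i = (1::nat) then b else c)" for i
  define f where "f C = (if C \<in> orbit v B then g (inv_into {..<v} (\<lambda>k. translate v k B) C mod 3)
    else if translate v n C = C then -1 else w (orbit v C))" for C
  have "f C \<in> {-2, -1, 1, 2}" if "C \<in> D" for C
    using that abc(1) w(1) unfolding f_def g_def Rest_def by auto
  moreover have "(\<Sum>C\<in>{C\<in>D. x \<in> C}. f C) = 0" if x: "x < v" for x
  proof -
    have "C \<notin> orbit v B" if "translate v n C = C" for C
      using that orbit_subset_nonfixed[OF v(1) B(1) B_full] by blast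
    then have "(\<Sum>C\<in>{C\<in>D. x \<in> C}. f C) = g 0 + g 1 + g 2 - int s + 3 * T"
      using sum_blocks_through_split[OF v(1) B(1) B_full B(2) x, of f g w] s(2)[OF x]
      unfolding T_def Rest_def f_def by simp
    then show ?thesis using abc(2) unfolding g_def by simp
  qed
  ultimately show ?thesis unfolding zero_sum_flow_3_iff by blast
qed

end

theorem mainTheorem5:
  fixes X :: "'a set" and Bs :: "'a set set"
  assumes "STS X Bs"
    and "cyclic_design X Bs"
    and "card X \<noteq> 7"
    and "card X mod 6 = 1 \<or> card X mod 18 = 9"
  shows "\<exists>f. zero_sum_flow 3 X Bs f"
proof -
  obtain \<phi> :: "'a \<Rightarrow> nat" where \<phi>: "bij_betw \<phi> X {..<card X}"
    and cyclic: "\<forall>B\<in>Bs. (\<lambda>i. (i + 1) mod card X) ` (\<phi> ` B) \<in> (`) \<phi> ` Bs"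
    using assms(2) unfolding cyclic_design_def atLeast0LessThan by blast
  interpret cyclic_sts "card X" "(`) \<phi> ` Bs"
  proof
    show "0 < card X" using assms(4) by auto
    show "STS {..<card X} ((`) \<phi> ` Bs)" by (rule STS_image[OF \<phi> assms(1)])
    show "translate (card X) 1 C \<in> (`) \<phi> ` Bs" if "C \<in> (`) \<phi> ` Bs" for C
      using that cyclic unfolding translate_def by (auto simp: image_image)
  qed
  obtain f where "zero_sum_flow 3 (\<phi> ` X) ((`) \<phi> ` Bs) f"
    using zero_sum_flow_if_mod_6 zero_sum_flow_if_mod_18 assms(3,4) \<phi>
    by (metis bij_betw_imp_surj_on)
  moreover have "\<forall>B\<in>Bs. B \<subseteq> X" using assms(1) unfolding STS_def by blast
  ultimately show ?thesis
    using zero_sum_flow_image bij_betw_imp_inj_on[OF \<phi>] by blast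
qed

end
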